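(* Let $\{|k\rangle\}_{k=1}^n$ be an orthonormal basis of $\mathbb{C}^n$ and let $$\tilde{\mathcal{L}}(\rho)=-i[H,\rho]+\sum_a\Big(M^a\rho M^{a\dagger}-\tfrac12\{M^{a\dagger}M^a,\rho\}\Big)$$ be a Lindblad generator, with $H$ self-adjoint and $M^a$ arbitrary $n\times n$ matrices (finitely many). Suppose $\tilde{\mathcal{L}}(|i\rangle\langle i|)=0$ for every $i$. Then $H$ and all $M^a$ are diagonal in the basis $\{|k\rangle\}$; writing $M^a=\sum_k n^a_k|k\rangle\langle k|$ and $H=\sum_k h_k|k\rangle\langle k|$, one has for all $i\neq j$ $$\tilde{\mathcal{L}}(|i\rangle\langle j|)=-D_{ij}\,|i\rangle\langle j|,\qquad D_{ij}=\tfrac12\sum_a\big(|n^a_i|^2+|n^a_j|^2-2n^a_i\bar n^a_j\big)+i(h_i-h_j).$$ In particular, a Lindblad generator that couples only phases to phases does not mix distinct phases.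
   Context: For a density matrix $\rho$, the off-diagonal entries $\langle i|\rho|j\rangle$, $i\neq j$, are called phases and the diagonal entries probabilities. *)

theory Defs
  imports "HOL-Analysis.Analysis"
begin

text \<open>n x n complex matrices are rendered as complex^'n^'n, with 'n a finite index type
  (so n = CARD('n)).\<close>

definition cscale :: "complex \<Rightarrow> complex^'n^'m \<Rightarrow> complex^'n^'m" where
  "cscale c X = (\<chi> i j. c * X$i$j)"

definition cadj :: "complex^'n^'m \<Rightarrow> complex^'m^'n" where
  "cadj X = (\<chi> i j. cnj (X$j$i))"

definition cinner :: "complex^'n \<Rightarrow> complex^'n \<Rightarrow> complex" where
  "cinner u v = (\<Sum>k\<in>UNIV. cnj (u$k) * v$k)"

definition ketbra :: "complex^'n \<Rightarrow> complex^'n \<Rightarrow> complex^'n^'n" where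
  "ketbra u v = (\<chi> i j. u$i * cnj (v$j))"

definition commutator :: "complex^'n^'n \<Rightarrow> complex^'n^'n \<Rightarrow> complex^'n^'n" where
  "commutator X Y = X ** Y - Y ** X"

definition anticommutator :: "complex^'n^'n \<Rightarrow> complex^'n^'n \<Rightarrow> complex^'n^'n" where
  "anticommutator X Y = X ** Y + Y ** X"

definition lindblad ::
  "complex^'n^'n \<Rightarrow> 'a set \<Rightarrow> ('a \<Rightarrow> complex^'n^'n) \<Rightarrow> complex^'n^'n \<Rightarrow> complex^'n^'n" where
  "lindblad H A M \<rho> =
     cscale (- \<i>) (commutator H \<rho>)
     + (\<Sum>a\<in>A. M a ** \<rho> ** cadj (M a)
                 - cscale (1/2) (anticommutator (cadj (M a) ** M a) \<rho>))"

definition orthonormal_basis :: "('n::finite \<Rightarrow> complex^'n) \<Rightarrow> bool" where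
  "orthonormal_basis b \<longleftrightarrow> (\<forall>i j. cinner (b i) (b j) = (if i = j then 1 else 0))"

end

theory Submission
  imports Defs
begin

(* Write P_k = |k><k| for the rank-one projections of the orthonormal basis.
   (1) Sandwiching the hypothesis L(P_i) = 0 between P_k and P_k with k <> i kills the
       commutator and the anticommutator terms and leaves  sum_a Y_a Y_a^dag = 0  with
       Y_a = P_k M^a P_i.  A sum of such positive terms vanishes only if every Y_a = 0, so
       every off-diagonal block of M^a vanishes and M^a is diagonal.
   (2) For diagonal jump operators the dissipator maps |i><j| to a multiple of |i><j|, and
       this multiple is 0 when i = j.  Hence L(P_i) = -i[H,P_i] = 0, so H commutes with every
       P_k and is diagonal as well.
   (3) For diagonal H and M^a, a direct computation on |i><j| gives the dephasing rate D_ij. *)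

section \<open>Scalars, adjoints and ket-bras\<close>

lemma cscale_mult_left: "cscale c X ** Y = cscale c (X ** Y)"
  by (simp add: cscale_def matrix_matrix_mult_def vec_eq_iff sum_distrib_left mult.assoc)

lemma cscale_mult_right: "X ** cscale c Y = cscale c (X ** Y)"
  by (simp add: cscale_def matrix_matrix_mult_def vec_eq_iff sum_distrib_left mult.left_commute)

lemma cscale_cscale: "cscale c (cscale d X) = cscale (c * d) X"
  by (simp add: cscale_def vec_eq_iff mult.assoc)

lemma cscale_zero [simp]: "cscale 0 X = 0" "cscale c 0 = 0"
  by (simp_all add: cscale_def vec_eq_iff)

lemma cscale_add: "cscale c X + cscale d X = cscale (c + d) X"
  by (simp add: cscale_def vec_eq_iff algebra_simps)

lemma cscale_diff: "cscale c X - cscale d X = cscale (c - d) X"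
  by (simp add: cscale_def vec_eq_iff algebra_simps)

lemma cscale_sum: "(\<Sum>a\<in>A. cscale (f a) X) = cscale (\<Sum>a\<in>A. f a) X"
  by (simp add: cscale_def vec_eq_iff sum_distrib_right)

lemma cscale_distrib: "cscale c (X + Y) = cscale c X + cscale c Y"
  "cscale c (X - Y) = cscale c X - cscale c Y" "cscale 1 X = X"
  by (simp_all add: cscale_def vec_eq_iff algebra_simps)

lemma matrix_mult_distrib:
  fixes X Y Z :: "complex^'n::finite^'n"
  shows "X ** (Y + Z) = X ** Y + X ** Z" "(Y + Z) ** X = Y ** X + Z ** X"
    "X ** (Y - Z) = X ** Y - X ** Z" "(Y - Z) ** X = Y ** X - Z ** X"
  by (simp_all add: matrix_matrix_mult_def vec_eq_iff algebra_simps sum.distrib sum_subtractf)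

lemma matrix_mult_sum_left: "(\<Sum>k\<in>S. f k) ** Y = (\<Sum>k\<in>S. f k ** Y)"
  by (simp add: matrix_matrix_mult_def vec_eq_iff sum_distrib_right) (intro allI sum.swap)

lemma matrix_mult_sum_right: "Y ** (\<Sum>k\<in>S. f k) = (\<Sum>k\<in>S. Y ** f k)"
  by (simp add: matrix_matrix_mult_def vec_eq_iff sum_distrib_left) (intro allI sum.swap)

lemma cadj_cscale: "cadj (cscale c X) = cscale (cnj c) (cadj X)"
  by (simp add: cscale_def cadj_def vec_eq_iff)

lemma cadj_sum: "cadj (\<Sum>k\<in>S. f k) = (\<Sum>k\<in>S. cadj (f k))"
  by (simp add: cadj_def vec_eq_iff)

lemma cadj_mult: "cadj (X ** Y) = cadj Y ** cadj X"
  by (simp add: cadj_def matrix_matrix_mult_def vec_eq_iff mult.commute)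

lemma cadj_ketbra: "cadj (ketbra u v) = ketbra v u"
  by (simp add: ketbra_def cadj_def vec_eq_iff)

lemma ketbra_mult: "ketbra u v ** ketbra w x = cscale (cinner v w) (ketbra u x)"
  by (simp add: ketbra_def cscale_def cinner_def matrix_matrix_mult_def vec_eq_iff
      sum_distrib_left sum_distrib_right mult_ac)

lemma ketbra_mult_assoc: "X ** ketbra u v ** ketbra w x = cscale (cinner v w) (X ** ketbra u x)"
  by (simp add: matrix_mul_assoc[symmetric] ketbra_mult cscale_mult_right)

lemma ketbra_sandwich:
  "ketbra u u' ** X ** ketbra v' v = cscale (cinner u' (X *v v')) (ketbra u v)"
proof -
  have "\<And>i j. (\<Sum>k\<in>UNIV. \<Sum>l\<in>UNIV. u $ i * cnj (u' $ l) * X $ l $ k * v' $ k * cnj (v $ j))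
      = (\<Sum>l\<in>UNIV. \<Sum>k\<in>UNIV. cnj (u' $ l) * X $ l $ k * v' $ k * u $ i * cnj (v $ j))"
    by (subst sum.swap) (simp add: mult_ac)
  then show ?thesis
    by (simp add: ketbra_def cscale_def cinner_def matrix_matrix_mult_def matrix_vector_mult_def
        vec_eq_iff sum_distrib_left sum_distrib_right mult_ac)
qed

text \<open>A sum of positive matrices Y Y^dag vanishes only if every Y vanishes
  (look at the diagonal entries, which are sums of squared moduli).\<close>

lemma sum_gram_zero_imp_zero:
  fixes Y :: "'a \<Rightarrow> complex^'n::finite^'n"
  assumes fin: "finite A" and zero: "(\<Sum>a\<in>A. Y a ** cadj (Y a)) = 0"
  shows "\<forall>a\<in>A. Y a = 0"
proof -
  have "\<forall>a\<in>A. \<forall>s. Y a $ r $ s = 0" for r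
  proof -
    have "complex_of_real (\<Sum>a\<in>A. \<Sum>s\<in>UNIV. (cmod (Y a $ r $ s))\<^sup>2)
        = (\<Sum>a\<in>A. Y a ** cadj (Y a)) $ r $ r"
      by (simp add: complex_norm_square[symmetric] matrix_matrix_mult_def cadj_def
          del: of_real_power)
    then have "(\<Sum>a\<in>A. \<Sum>s\<in>UNIV. (cmod (Y a $ r $ s))\<^sup>2) = 0"
      using zero of_real_eq_0_iff by fastforce
    then show ?thesis
      using fin by (simp add: sum_nonneg_eq_0_iff sum_nonneg)
  qed
  then show ?thesis by (simp add: vec_eq_iff)
qed

section \<open>Orthonormal bases and diagonal operators\<close>

lemma onb_inner: "orthonormal_basis b \<Longrightarrow> cinner (b i) (b j) = (if i = j then 1 else 0)"
  by (simp add: orthonormal_basis_def)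

text \<open>Completeness: the projections onto an orthonormal basis sum to the identity.
  (The matrix with columns b k is unitary, B^dag B = 1, hence also B B^dag = 1.)\<close>

lemma onb_completeness:
  fixes b :: "'n::finite \<Rightarrow> complex^'n"
  assumes onb: "orthonormal_basis b"
  shows "(\<Sum>k\<in>UNIV. ketbra (b k) (b k)) = mat 1"
proof -
  define B :: "complex^'n^'n" where "B = (\<chi> i k. b k $ i)"
  have "cadj B ** B = mat 1"
    using onb by (simp add: B_def cadj_def matrix_matrix_mult_def mat_def vec_eq_iff
        orthonormal_basis_def cinner_def)
  then have "B ** cadj B = mat 1"
    using matrix_left_right_inverse by blast
  then show ?thesis
    by (simp add: B_def cadj_def matrix_matrix_mult_def mat_def vec_eq_iff ketbra_def)
qed

lemma onb_expansion:
  fixes b :: "'n::finite \<Rightarrow> complex^'n"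
  assumes onb: "orthonormal_basis b"
  shows "X = (\<Sum>k\<in>UNIV. \<Sum>l\<in>UNIV. cscale (cinner (b k) (X *v b l)) (ketbra (b k) (b l)))"
proof -
  have "X = (\<Sum>k\<in>UNIV. ketbra (b k) (b k)) ** X ** (\<Sum>l\<in>UNIV. ketbra (b l) (b l))"
    using onb_completeness[OF onb] by simp
  also have "\<dots> = (\<Sum>k\<in>UNIV. \<Sum>l\<in>UNIV. ketbra (b k) (b k) ** X ** ketbra (b l) (b l))"
    by (simp add: matrix_mult_sum_left matrix_mult_sum_right) (rule sum.swap)
  finally show ?thesis
    by (simp add: ketbra_sandwich)
qed

text \<open>Basis vectors are nonzero, so a scalar multiple of a basis ket-bra vanishes only
  when the scalar does.\<close>

lemma cscale_ketbra_eq_zero: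
  assumes onb: "orthonormal_basis b" and zero: "cscale c (ketbra (b k) (b l)) = 0"
  shows "c = 0"
proof -
  have nonzero: "\<exists>p. b m $ p \<noteq> 0" for m
  proof (rule ccontr)
    assume "\<nexists>p. b m $ p \<noteq> 0"
    then have "cinner (b m) (b m) = 0" by (simp add: cinner_def)
    with onb_inner[OF onb, of m m] show False by simp
  qed
  obtain p q where p: "b k $ p \<noteq> 0" and q: "b l $ q \<noteq> 0"
    using nonzero by blast
  have "c * (b k $ p * cnj (b l $ q)) = 0"
    using zero by (simp add: cscale_def ketbra_def vec_eq_iff) (metis mult.assoc)
  with p q show ?thesis by simp
qed

definition diag_op :: "('n::finite \<Rightarrow> complex^'n) \<Rightarrow> ('n \<Rightarrow> complex) \<Rightarrow> complex^'n^'n" where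
  "diag_op b c = (\<Sum>k\<in>UNIV. cscale (c k) (ketbra (b k) (b k)))"

lemma diagonal_if_offdiag_blocks_vanish:
  fixes b :: "'n::finite \<Rightarrow> complex^'n"
  assumes onb: "orthonormal_basis b"
    and off: "\<And>k l. k \<noteq> l \<Longrightarrow> ketbra (b k) (b k) ** X ** ketbra (b l) (b l) = 0"
  shows "X = diag_op b (\<lambda>k. cinner (b k) (X *v b k))"
proof -
  have coeff: "cinner (b k) (X *v b l) = 0" if "k \<noteq> l" for k l
    using off[OF that] by (simp add: ketbra_sandwich cscale_ketbra_eq_zero[OF onb])
  have "X = (\<Sum>k\<in>UNIV. \<Sum>l\<in>UNIV. cscale (cinner (b k) (X *v b l)) (ketbra (b k) (b l)))"
    using onb_expansion[OF onb] .
  also have "\<dots> = (\<Sum>k\<in>UNIV. \<Sum>l\<in>UNIV.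
      if l = k then cscale (cinner (b k) (X *v b k)) (ketbra (b k) (b k)) else 0)"
    by (intro sum.cong refl) (auto simp: coeff)
  finally show ?thesis
    by (simp add: diag_op_def)
qed

lemma diag_op_mult_ketbra:
  assumes onb: "orthonormal_basis b"
  shows "diag_op b c ** ketbra (b i) v = cscale (c i) (ketbra (b i) v)"
proof -
  have "diag_op b c ** ketbra (b i) v
      = (\<Sum>k\<in>UNIV. if k = i then cscale (c i) (ketbra (b i) v) else 0)"
    unfolding diag_op_def matrix_mult_sum_left
    by (intro sum.cong refl)
      (simp add: cscale_mult_left ketbra_mult onb_inner[OF onb] cscale_cscale)
  then show ?thesis by simp
qed

lemma ketbra_mult_diag_op:
  assumes onb: "orthonormal_basis b"
  shows "ketbra v (b j) ** diag_op b c = cscale (c j) (ketbra v (b j))"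
proof -
  have "ketbra v (b j) ** diag_op b c
      = (\<Sum>k\<in>UNIV. if k = j then cscale (c j) (ketbra v (b j)) else 0)"
    unfolding diag_op_def matrix_mult_sum_right
    by (intro sum.cong refl)
      (auto simp add: cscale_mult_right ketbra_mult onb_inner[OF onb] cscale_cscale)
  then show ?thesis by simp
qed

lemma diag_op_mult_ketbra_assoc:
  "orthonormal_basis b \<Longrightarrow> X ** diag_op b c ** ketbra (b i) v = cscale (c i) (X ** ketbra (b i) v)"
  by (simp add: matrix_mul_assoc[symmetric] diag_op_mult_ketbra cscale_mult_right)

lemma ketbra_mult_diag_op_assoc:
  "orthonormal_basis b \<Longrightarrow> X ** ketbra v (b j) ** diag_op b c = cscale (c j) (X ** ketbra v (b j))"
  by (simp add: matrix_mul_assoc[symmetric] ketbra_mult_diag_op cscale_mult_right)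

lemma cadj_diag_op: "cadj (diag_op b c) = diag_op b (\<lambda>k. cnj (c k))"
  by (simp add: diag_op_def cadj_sum cadj_cscale cadj_ketbra)

lemma diagonal_if_commutes_with_projections:
  fixes b :: "'n::finite \<Rightarrow> complex^'n"
  assumes onb: "orthonormal_basis b"
    and comm: "\<And>k. X ** ketbra (b k) (b k) = ketbra (b k) (b k) ** X"
  shows "X = diag_op b (\<lambda>k. cinner (b k) (X *v b k))"
proof (rule diagonal_if_offdiag_blocks_vanish[OF onb])
  fix k l :: 'n assume "k \<noteq> l"
  have "ketbra (b k) (b k) ** X ** ketbra (b l) (b l)
      = ketbra (b k) (b k) ** (ketbra (b l) (b l) ** X)"
    by (simp add: matrix_mul_assoc[symmetric] comm)
  with \<open>k \<noteq> l\<close> show "ketbra (b k) (b k) ** X ** ketbra (b l) (b l) = 0"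
    by (simp add: matrix_mul_assoc ketbra_mult onb_inner[OF onb])
qed

section \<open>The Lindblad generator in a basis\<close>

definition dissipator ::
  "'a set \<Rightarrow> ('a \<Rightarrow> complex^'n^'n) \<Rightarrow> complex^'n^'n \<Rightarrow> complex^'n^'n" where
  "dissipator A M \<rho> =
     (\<Sum>a\<in>A. M a ** \<rho> ** cadj (M a) - cscale (1/2) (anticommutator (cadj (M a) ** M a) \<rho>))"

lemma lindblad_split:
  "lindblad H A M \<rho> = cscale (- \<i>) (commutator H \<rho>) + dissipator A M \<rho>"
  by (simp add: lindblad_def dissipator_def)

lemma projection_sandwich_lindblad:
  fixes b :: "'n::finite \<Rightarrow> complex^'n"
  assumes onb: "orthonormal_basis b" and "k \<noteq> i"
  shows "ketbra (b k) (b k) ** lindblad H A M (ketbra (b i) (b i)) ** ketbra (b k) (b k)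
      = (\<Sum>a\<in>A. (ketbra (b k) (b k) ** M a ** ketbra (b i) (b i))
               ** cadj (ketbra (b k) (b k) ** M a ** ketbra (b i) (b i)))"
  using \<open>k \<noteq> i\<close>
  by (simp add: lindblad_def commutator_def anticommutator_def matrix_mult_distrib cscale_distrib
      matrix_mult_sum_left matrix_mult_sum_right cscale_mult_left cscale_mult_right
      matrix_mul_assoc ketbra_mult ketbra_mult_assoc onb_inner[OF onb] cadj_mult cadj_ketbra)

lemma jump_operators_diagonal:
  fixes b :: "'n::finite \<Rightarrow> complex^'n"
  assumes onb: "orthonormal_basis b" and finA: "finite A"
    and fix_pops: "\<And>i. lindblad H A M (ketbra (b i) (b i)) = 0"
    and "a \<in> A"
  shows "M a = diag_op b (\<lambda>k. cinner (b k) (M a *v b k))"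
proof (rule diagonal_if_offdiag_blocks_vanish[OF onb])
  fix k l :: 'n assume "k \<noteq> l"
  have "(\<Sum>a\<in>A. (ketbra (b k) (b k) ** M a ** ketbra (b l) (b l))
             ** cadj (ketbra (b k) (b k) ** M a ** ketbra (b l) (b l))) = 0"
    using projection_sandwich_lindblad[OF onb \<open>k \<noteq> l\<close>, of H A M] fix_pops by simp
  then have "\<forall>a'\<in>A. ketbra (b k) (b k) ** M a' ** ketbra (b l) (b l) = 0"
    by (rule sum_gram_zero_imp_zero[OF finA])
  with \<open>a \<in> A\<close> show "ketbra (b k) (b k) ** M a ** ketbra (b l) (b l) = 0"
    by blast
qed

lemma dissipator_diag:
  fixes b :: "'n::finite \<Rightarrow> complex^'n"
  assumes onb: "orthonormal_basis b" and Md: "\<forall>a\<in>A. M a = diag_op b (nn a)"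
  shows "dissipator A M (ketbra (b i) (b j))
    = cscale (\<Sum>a\<in>A. nn a i * cnj (nn a j)
                     - (1/2) * (cnj (nn a i) * nn a i + cnj (nn a j) * nn a j))
        (ketbra (b i) (b j))"
proof -
  have "dissipator A M (ketbra (b i) (b j))
    = (\<Sum>a\<in>A. cscale (nn a i * cnj (nn a j)) (ketbra (b i) (b j))
        - cscale (1/2) (cscale (cnj (nn a i) * nn a i) (ketbra (b i) (b j))
                        + cscale (cnj (nn a j) * nn a j) (ketbra (b i) (b j))))"
    unfolding dissipator_def anticommutator_def
    by (intro sum.cong refl)
      (simp add: Md cadj_diag_op diag_op_mult_ketbra ketbra_mult_diag_op onb
        diag_op_mult_ketbra_assoc ketbra_mult_diag_op_assoc cscale_mult_left cscale_mult_right
        cscale_cscale matrix_mul_assoc mult.commute)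
  then show ?thesis
    by (simp only: cscale_add cscale_diff cscale_cscale cscale_sum)
qed

lemma dissipator_diag_population:
  fixes b :: "'n::finite \<Rightarrow> complex^'n"
  assumes onb: "orthonormal_basis b" and Md: "\<forall>a\<in>A. M a = diag_op b (nn a)"
  shows "dissipator A M (ketbra (b i) (b i)) = 0"
  by (simp add: dissipator_diag[OF onb Md] mult.commute)

lemma commutator_diag:
  assumes onb: "orthonormal_basis b"
  shows "commutator (diag_op b h) (ketbra (b i) (b j)) = cscale (h i - h j) (ketbra (b i) (b j))"
  by (simp add: commutator_def diag_op_mult_ketbra ketbra_mult_diag_op onb cscale_diff)

lemma lindblad_diag:
  fixes b :: "'n::finite \<Rightarrow> complex^'n"
  assumes onb: "orthonormal_basis b" and Md: "\<forall>a\<in>A. M a = diag_op b (nn a)"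
  shows "lindblad (diag_op b h) A M (ketbra (b i) (b j))
    = cscale (- \<i> * (h i - h j)
              + (\<Sum>a\<in>A. nn a i * cnj (nn a j)
                         - (1/2) * (cnj (nn a i) * nn a i + cnj (nn a j) * nn a j)))
        (ketbra (b i) (b j))"
  by (simp add: lindblad_split commutator_diag[OF onb] dissipator_diag[OF onb Md]
      cscale_cscale cscale_add)

theorem mainTheorem3:
  fixes b :: "'n::finite \<Rightarrow> complex^'n"
    and H :: "complex^'n^'n"
    and A :: "'a set"
    and M :: "'a \<Rightarrow> complex^'n^'n"
  assumes onb: "orthonormal_basis b"
    and selfadj: "cadj H = H"
    and finA: "finite A"
    and fix_pops: "\<forall>i. lindblad H A M (ketbra (b i) (b i)) = 0"
  shows "(\<exists>h nn. H = (\<Sum>k\<in>UNIV. cscale (h k) (ketbra (b k) (b k)))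
              \<and> (\<forall>a\<in>A. M a = (\<Sum>k\<in>UNIV. cscale (nn a k) (ketbra (b k) (b k)))))
       \<and> (\<forall>(h :: 'n \<Rightarrow> complex) (nn :: 'a \<Rightarrow> 'n \<Rightarrow> complex).
            H = (\<Sum>k\<in>UNIV. cscale (h k) (ketbra (b k) (b k)))
            \<and> (\<forall>a\<in>A. M a = (\<Sum>k\<in>UNIV. cscale (nn a k) (ketbra (b k) (b k))))
            \<longrightarrow> (\<forall>i j. i \<noteq> j \<longrightarrow>
                  lindblad H A M (ketbra (b i) (b j))
                  = cscale (- ((1/2) * (\<Sum>a\<in>A. of_real ((cmod (nn a i))\<^sup>2) + of_real ((cmod (nn a j))\<^sup>2)
                                              - 2 * nn a i * cnj (nn a j))
                               + \<i> * (h i - h j)))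
                      (ketbra (b i) (b j))))"
proof (intro conjI allI impI)
  define nn where "nn a k = cinner (b k) (M a *v b k)" for a k
  have Md: "\<forall>a\<in>A. M a = diag_op b (nn a)"
    using jump_operators_diagonal[OF onb finA] fix_pops unfolding nn_def by blast
  have "H ** ketbra (b k) (b k) = ketbra (b k) (b k) ** H" for k
    using fix_pops dissipator_diag_population[OF onb Md, of k]
    by (simp add: lindblad_split commutator_def cscale_def vec_eq_iff)
  then have "H = diag_op b (\<lambda>k. cinner (b k) (H *v b k))"
    by (rule diagonal_if_commutes_with_projections[OF onb])
  with Md show "\<exists>h nn. H = (\<Sum>k\<in>UNIV. cscale (h k) (ketbra (b k) (b k)))
      \<and> (\<forall>a\<in>A. M a = (\<Sum>k\<in>UNIV. cscale (nn a k) (ketbra (b k) (b k))))"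
    unfolding diag_op_def by (intro exI conjI) assumption+
next
  fix h :: "'n \<Rightarrow> complex" and nn :: "'a \<Rightarrow> 'n \<Rightarrow> complex" and i j
  assume "H = (\<Sum>k\<in>UNIV. cscale (h k) (ketbra (b k) (b k)))
      \<and> (\<forall>a\<in>A. M a = (\<Sum>k\<in>UNIV. cscale (nn a k) (ketbra (b k) (b k))))"
  then have Hd: "H = diag_op b h" and Md: "\<forall>a\<in>A. M a = diag_op b (nn a)"
    by (simp_all add: diag_op_def)
  show "lindblad H A M (ketbra (b i) (b j))
      = cscale (- ((1/2) * (\<Sum>a\<in>A. of_real ((cmod (nn a i))\<^sup>2) + of_real ((cmod (nn a j))\<^sup>2)
                                  - 2 * nn a i * cnj (nn a j))
                   + \<i> * (h i - h j)))
          (ketbra (b i) (b j))"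
    unfolding Hd lindblad_diag[OF onb Md]
    by (simp del: of_real_power add: complex_norm_square algebra_simps sum_subtractf
        sum.distrib sum_distrib_left sum_divide_distrib)
qed

end
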